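(* Let $R \subseteq S$ be an extension of commutative rings such that $S$ is generated as an $R$-module by $1, f_1, \ldots, f_n$, where $n>0$ and $f_i \in S$. Suppose $S$ has a presentation as an $R$-module $$R^{\oplus q} \xrightarrow{\ \mathbb M\ } R^{\oplus(n+1)} \xrightarrow{\ \varepsilon\ } S \to 0$$ (exact), where $q>0$, $\mathbb M$ is an $(n+1)\times q$ matrix with entries in $R$, and $\varepsilon = [1\ f_1\ \cdots\ f_n]$, i.e. $\varepsilon(a_0,\ldots,a_n)^T = a_0 + a_1f_1+\cdots+a_nf_n$. Let $J$ be the ideal of $S$ generated by all entries of the first row of $\mathbb M$. Then the strict closure $R^*$ of $R$ in $S$ satisfies $R^* \subseteq R + J$.
   Context: For an extension of commutative rings $R \subseteq S$, the strict closure of $R$ in $S$ is $R^* = \{\alpha \in S \mid \alpha\otimes 1 = 1\otimes \alpha \text{ in } S\otimes_R S\}$. *)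

theory Defs
  imports Main
begin

text \<open>The ambient commutative ring S is the type 'a; the subring R is a set.\<close>

definition subring :: "'a::comm_ring_1 set \<Rightarrow> bool" where
  "subring R \<longleftrightarrow> 0 \<in> R \<and> 1 \<in> R \<and>
     (\<forall>x\<in>R. \<forall>y\<in>R. x + y \<in> R \<and> x - y \<in> R \<and> x * y \<in> R)"

text \<open>Generators of the free abelian group on S x S (finitely supported integer functions).\<close>
definition tdelta :: "'a \<Rightarrow> 'a \<Rightarrow> ('a \<times> 'a \<Rightarrow> int)" where
  "tdelta x y = (\<lambda>p. if p = (x, y) then 1 else 0)"

text \<open>The subgroup of relations whose quotient is the tensor product S (x)_R S.\<close>
inductive_set tensor_rel :: "'a::comm_ring_1 set \<Rightarrow> ('a \<times> 'a \<Rightarrow> int) set"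
  for R :: "'a set" where
  zero: "(\<lambda>_. 0) \<in> tensor_rel R"
| add: "u \<in> tensor_rel R \<Longrightarrow> v \<in> tensor_rel R \<Longrightarrow> (\<lambda>p. u p + v p) \<in> tensor_rel R"
| neg: "u \<in> tensor_rel R \<Longrightarrow> (\<lambda>p. - u p) \<in> tensor_rel R"
| left: "(\<lambda>p. tdelta (x + x') y p - tdelta x y p - tdelta x' y p) \<in> tensor_rel R"
| right: "(\<lambda>p. tdelta x (y + y') p - tdelta x y p - tdelta x y' p) \<in> tensor_rel R"
| scal: "r \<in> R \<Longrightarrow> (\<lambda>p. tdelta (r * x) y p - tdelta x (r * y) p) \<in> tensor_rel R"

text \<open>alpha (x) 1 = 1 (x) alpha in S (x)_R S.\<close>
definition strict_closure :: "'a::comm_ring_1 set \<Rightarrow> 'a set" where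
  "strict_closure R = {\<alpha>. (\<lambda>p. tdelta \<alpha> 1 p - tdelta 1 \<alpha> p) \<in> tensor_rel R}"

end

theory Submission
  imports Defs
begin

text \<open>Choose for every \<open>y \<in> S\<close> coefficients \<open>a \<in> R\<^sup>n\<^sup>+\<^sup>1\<close> with \<open>\<epsilon>(a) = y\<close> and put \<open>\<phi>(y) = a\<^sub>0\<close>.
  Two choices differ by a vector in the image of \<open>\<MM>\<close>, so \<open>\<phi>\<close> is well defined and \<open>R\<close>-linear
  modulo the ideal \<open>J\<close> spanned by the first row of \<open>\<MM>\<close>, with \<open>\<phi>(1) \<equiv> 1\<close>. Hence
  \<open>(x, y) \<mapsto> x \<phi>(y) mod J\<close> is \<open>R\<close>-balanced and biadditive and induces a map
  \<open>S \<otimes>\<^sub>R S \<rightarrow> S/J\<close>, sending \<open>\<alpha> \<otimes> 1 - 1 \<otimes> \<alpha>\<close> to \<open>\<alpha> - \<phi>(\<alpha>)\<close>. For \<open>\<alpha> \<in> R\<^sup>*\<close> this vanishes,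
  so \<open>\<alpha> \<in> \<phi>(\<alpha>) + J \<subseteq> R + J\<close>.\<close>

definition tensor_eval :: "('a \<times> 'a \<Rightarrow> 'b::ring_1) \<Rightarrow> ('a \<times> 'a \<Rightarrow> int) \<Rightarrow> 'b" where
  "tensor_eval \<Phi> u = (\<Sum>p | u p \<noteq> 0. of_int (u p) * \<Phi> p)"

lemma tensor_eval_eq_sum:
  assumes "finite A" "{p. u p \<noteq> 0} \<subseteq> A"
  shows "tensor_eval \<Phi> u = (\<Sum>p\<in>A. of_int (u p) * \<Phi> p)"
  unfolding tensor_eval_def by (rule sum.mono_neutral_left) (use assms in auto)

lemma finite_support_tdelta: "finite {p. tdelta x y p \<noteq> 0}"
  by (rule finite_subset[of _ "{(x, y)}"]) (auto simp: tdelta_def)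

lemma tensor_eval_tdelta: "tensor_eval \<Phi> (tdelta x y) = \<Phi> (x, y)"
proof -
  have "{p. tdelta x y p \<noteq> 0} = {(x, y)}" by (auto simp: tdelta_def)
  then show ?thesis by (simp add: tensor_eval_def tdelta_def)
qed

lemma tensor_eval_add:
  assumes "finite {p. u p \<noteq> 0}" "finite {p. v p \<noteq> 0}"
  shows "tensor_eval \<Phi> (\<lambda>p. u p + v p) = tensor_eval \<Phi> u + tensor_eval \<Phi> v"
proof -
  let ?A = "{p. u p \<noteq> 0} \<union> {p. v p \<noteq> 0}"
  have A: "finite ?A" using assms by simp
  have "tensor_eval \<Phi> (\<lambda>p. u p + v p) = (\<Sum>p\<in>?A. of_int (u p + v p) * \<Phi> p)"
    by (rule tensor_eval_eq_sum[OF A]) auto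
  also have "\<dots> = (\<Sum>p\<in>?A. of_int (u p) * \<Phi> p) + (\<Sum>p\<in>?A. of_int (v p) * \<Phi> p)"
    by (simp add: distrib_right sum.distrib)
  also have "\<dots> = tensor_eval \<Phi> u + tensor_eval \<Phi> v"
    by (simp add: tensor_eval_eq_sum[OF A])
  finally show ?thesis .
qed

lemma tensor_eval_neg: "tensor_eval \<Phi> (\<lambda>p. - u p) = - tensor_eval \<Phi> u"
  by (simp add: tensor_eval_def sum_negf)

lemma tensor_eval_diff:
  assumes "finite {p. u p \<noteq> 0}" "finite {p. v p \<noteq> 0}"
  shows "tensor_eval \<Phi> (\<lambda>p. u p - v p) = tensor_eval \<Phi> u - tensor_eval \<Phi> v"
  using tensor_eval_add[of u "\<lambda>p. - v p" \<Phi>] assms by (simp add: tensor_eval_neg)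

lemma finite_support_diff:
  assumes "finite {p. u p \<noteq> 0}" "finite {p. v p \<noteq> 0}"
  shows "finite {p. (u p - v p :: int) \<noteq> 0}"
  by (rule finite_subset[of _ "{p. u p \<noteq> 0} \<union> {p. v p \<noteq> 0}"]) (use assms in auto)

lemma tensor_eval_tdelta_diff:
  "tensor_eval \<Phi> (\<lambda>p. tdelta a b p - tdelta c d p) = \<Phi> (a, b) - \<Phi> (c, d)"
  by (simp add: tensor_eval_diff finite_support_tdelta tensor_eval_tdelta)

lemma tensor_eval_tdelta_diff_diff:
  "tensor_eval \<Phi> (\<lambda>p. tdelta a b p - tdelta c d p - tdelta e g p) =
    \<Phi> (a, b) - \<Phi> (c, d) - \<Phi> (e, g)"
  using tensor_eval_diff[OF finite_support_diff[OF finite_support_tdelta finite_support_tdelta]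
      finite_support_tdelta, of \<Phi> a b c d e g]
  by (simp add: tensor_eval_tdelta_diff tensor_eval_tdelta)

lemma finite_support_tensor_rel:
  assumes "u \<in> tensor_rel R"
  shows "finite {p. u p \<noteq> 0}"
  using assms
proof induction
  case (add u v)
  then show ?case
    by (intro finite_subset[of "{p. u p + v p \<noteq> 0}" "{p. u p \<noteq> 0} \<union> {p. v p \<noteq> 0}"]) auto
next
  case left
  show ?case by (intro finite_support_diff finite_support_tdelta)
next
  case right
  show ?case by (intro finite_support_diff finite_support_tdelta)
next
  case scal
  show ?case by (intro finite_support_diff finite_support_tdelta)
qed simp_all

text \<open>The universal property of \<open>S \<otimes>\<^sub>R S\<close>, in the form needed here: a map that is
  biadditive and \<open>R\<close>-balanced modulo an additive subgroup \<open>J\<close> kills every relation.\<close>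

lemma tensor_eval_tensor_rel_mem:
  fixes \<Phi> :: "'a::comm_ring_1 \<times> 'a \<Rightarrow> 'b::ring_1"
  assumes J_zero: "0 \<in> J"
    and J_add: "\<And>a b. a \<in> J \<Longrightarrow> b \<in> J \<Longrightarrow> a + b \<in> J"
    and J_neg: "\<And>a. a \<in> J \<Longrightarrow> - a \<in> J"
    and additive_left: "\<And>x x' y. \<Phi> (x + x', y) - \<Phi> (x, y) - \<Phi> (x', y) \<in> J"
    and additive_right: "\<And>x y y'. \<Phi> (x, y + y') - \<Phi> (x, y) - \<Phi> (x, y') \<in> J"
    and balanced: "\<And>r x y. r \<in> R \<Longrightarrow> \<Phi> (r * x, y) - \<Phi> (x, r * y) \<in> J"
    and u: "u \<in> tensor_rel R"
  shows "tensor_eval \<Phi> u \<in> J"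
  using u
proof induction
  case zero
  show ?case by (simp add: tensor_eval_def J_zero)
next
  case (add u v)
  then show ?case by (simp add: tensor_eval_add finite_support_tensor_rel J_add)
next
  case (neg u)
  then show ?case by (simp add: tensor_eval_neg J_neg)
next
  case left
  show ?case using additive_left by (simp add: tensor_eval_tdelta_diff_diff)
next
  case right
  show ?case using additive_right by (simp add: tensor_eval_tdelta_diff_diff)
next
  case scal
  then show ?case using balanced by (simp add: tensor_eval_tdelta_diff)
qed

definition is_ideal :: "'a::comm_ring_1 set \<Rightarrow> bool" where
  "is_ideal J \<longleftrightarrow> 0 \<in> J \<and> (\<forall>a\<in>J. \<forall>b\<in>J. a + b \<in> J) \<and> (\<forall>x. \<forall>a\<in>J. x * a \<in> J)"

lemma is_ideal_neg: "is_ideal J \<Longrightarrow> a \<in> J \<Longrightarrow> - a \<in> J"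
  unfolding is_ideal_def by (metis mult_minus1)

lemma is_ideal_diff: "is_ideal J \<Longrightarrow> a \<in> J \<Longrightarrow> b \<in> J \<Longrightarrow> a - b \<in> J"
  using is_ideal_neg[of J b] unfolding is_ideal_def by (metis diff_conv_add_uminus)

lemma strict_closure_diff_mem_ideal:
  fixes \<phi> :: "'a::comm_ring_1 \<Rightarrow> 'a"
  assumes J: "is_ideal J"
    and add: "\<And>y y'. \<phi> (y + y') - \<phi> y - \<phi> y' \<in> J"
    and scale: "\<And>r y. r \<in> R \<Longrightarrow> r * \<phi> y - \<phi> (r * y) \<in> J"
    and one: "\<phi> 1 - 1 \<in> J"
    and \<alpha>: "\<alpha> \<in> strict_closure R"
  shows "\<alpha> - \<phi> \<alpha> \<in> J"
proof -
  define \<Phi> where "\<Phi> = (\<lambda>(x, y). x * \<phi> y)"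
  have J_mult: "\<And>x a. a \<in> J \<Longrightarrow> x * a \<in> J" using J by (simp add: is_ideal_def)
  have rel: "(\<lambda>p. tdelta \<alpha> 1 p - tdelta 1 \<alpha> p) \<in> tensor_rel R"
    using \<alpha> by (simp add: strict_closure_def)
  have "tensor_eval \<Phi> (\<lambda>p. tdelta \<alpha> 1 p - tdelta 1 \<alpha> p) \<in> J"
  proof (rule tensor_eval_tensor_rel_mem[OF _ _ _ _ _ _ rel])
    show "\<Phi> (x, y + y') - \<Phi> (x, y) - \<Phi> (x, y') \<in> J" for x y y'
      using J_mult[OF add, of x y y'] by (simp add: \<Phi>_def algebra_simps)
    show "\<Phi> (r * x, y) - \<Phi> (x, r * y) \<in> J" if "r \<in> R" for r x y
      using J_mult[OF scale[OF that], of x y] by (simp add: \<Phi>_def algebra_simps)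
  qed (use J in \<open>auto simp: \<Phi>_def algebra_simps is_ideal_def intro: is_ideal_neg\<close>)
  then have "\<alpha> * \<phi> 1 - \<phi> \<alpha> \<in> J"
    by (simp add: tensor_eval_tdelta_diff \<Phi>_def)
  moreover have "\<alpha> * (\<phi> 1 - 1) \<in> J" using J_mult[OF one] .
  ultimately have "(\<alpha> * \<phi> 1 - \<phi> \<alpha>) - \<alpha> * (\<phi> 1 - 1) \<in> J" by (rule is_ideal_diff[OF J])
  then show ?thesis by (simp add: algebra_simps)
qed

definition ideal_span :: "(nat \<Rightarrow> 'a::comm_ring_1) \<Rightarrow> nat \<Rightarrow> 'a set" where
  "ideal_span g q = range (\<lambda>s. \<Sum>j<q. s j * g j)"

lemma is_ideal_ideal_span: "is_ideal (ideal_span g q)"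
  unfolding is_ideal_def ideal_span_def
proof (intro conjI ballI allI)
  show "0 \<in> range (\<lambda>s. \<Sum>j<q. s j * g j)" by (rule range_eqI[of _ _ "\<lambda>_. 0"]) simp
next
  fix a b assume "a \<in> range (\<lambda>s. \<Sum>j<q. s j * g j)" "b \<in> range (\<lambda>s. \<Sum>j<q. s j * g j)"
  then obtain s t where "a = (\<Sum>j<q. s j * g j)" "b = (\<Sum>j<q. t j * g j)" by blast
  then show "a + b \<in> range (\<lambda>s. \<Sum>j<q. s j * g j)"
    by (intro range_eqI[of _ _ "\<lambda>j. s j + t j"]) (simp add: distrib_right sum.distrib)
next
  fix x a assume "a \<in> range (\<lambda>s. \<Sum>j<q. s j * g j)"
  then obtain s where "a = (\<Sum>j<q. s j * g j)" by blast
  then show "x * a \<in> range (\<lambda>s. \<Sum>j<q. s j * g j)"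
    by (intro range_eqI[of _ _ "\<lambda>j. x * s j"]) (simp add: sum_distrib_left mult.assoc)
qed

definition represents :: "'a::comm_ring_1 set \<Rightarrow> (nat \<Rightarrow> 'a) \<Rightarrow> nat \<Rightarrow> (nat \<Rightarrow> 'a) \<Rightarrow> 'a \<Rightarrow> bool"
  where "represents R f n a y \<longleftrightarrow> (\<forall>i\<le>n. a i \<in> R) \<and> y = a 0 + (\<Sum>i=1..n. a i * f i)"

lemma represents_add:
  "subring R \<Longrightarrow> represents R f n a y \<Longrightarrow> represents R f n b y' \<Longrightarrow>
    represents R f n (\<lambda>i. a i + b i) (y + y')"
  by (auto simp: represents_def subring_def distrib_right sum.distrib)

lemma represents_scale:
  "subring R \<Longrightarrow> r \<in> R \<Longrightarrow> represents R f n a y \<Longrightarrow> represents R f n (\<lambda>i. r * a i) (r * y)"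
  by (auto simp: represents_def subring_def distrib_left sum_distrib_left mult.assoc)

lemma represents_one: "subring R \<Longrightarrow> represents R f n (\<lambda>i. if i = 0 then 1 else 0) 1"
  by (simp add: represents_def subring_def)

lemma represents_unique_mod_first_row:
  assumes "subring R"
    and exact: "\<forall>d. (\<forall>i\<le>n. d i \<in> R) \<longrightarrow> d 0 + (\<Sum>i=1..n. d i * f i) = 0 \<longrightarrow>
        (\<exists>c. \<forall>i\<le>n. d i = (\<Sum>j<q. M i j * c j))"
    and a: "represents R f n a y" and b: "represents R f n b y"
  shows "a 0 - b 0 \<in> ideal_span (M 0) q"
proof -
  let ?d = "\<lambda>i. a i - b i"
  have d_R: "\<forall>i\<le>n. ?d i \<in> R" using a b \<open>subring R\<close> by (simp add: represents_def subring_def)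
  have "?d 0 + (\<Sum>i=1..n. ?d i * f i) =
      (a 0 + (\<Sum>i=1..n. a i * f i)) - (b 0 + (\<Sum>i=1..n. b i * f i))"
    by (simp add: left_diff_distrib sum_subtractf)
  also have "\<dots> = 0"
    using a b by (simp add: represents_def)
  finally obtain c where "\<forall>i\<le>n. ?d i = (\<Sum>j<q. M i j * c j)"
    using spec[OF exact, of ?d] d_R by blast
  then have "?d 0 = (\<Sum>j<q. c j * M 0 j)" by (simp add: mult.commute)
  then show ?thesis unfolding ideal_span_def by (rule range_eqI[of _ _ c])
qed

theorem theorem2p6:
  fixes R :: "'a::comm_ring_1 set" and f :: "nat \<Rightarrow> 'a" and n q :: nat
    and M :: "nat \<Rightarrow> nat \<Rightarrow> 'a"
  assumes "subring R"
    and "n > 0" and "q > 0"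
    and "\<forall>i\<le>n. \<forall>j<q. M i j \<in> R"
    and surj: "\<forall>s. \<exists>a. (\<forall>i\<le>n. a i \<in> R) \<and> s = a 0 + (\<Sum>i=1..n. a i * f i)"
    and exact: "\<forall>a. (\<forall>i\<le>n. a i \<in> R) \<longrightarrow>
        (a 0 + (\<Sum>i=1..n. a i * f i) = 0 \<longleftrightarrow>
         (\<exists>c. (\<forall>j<q. c j \<in> R) \<and> (\<forall>i\<le>n. a i = (\<Sum>j<q. M i j * c j))))"
  shows "strict_closure R \<subseteq>
    {r + (\<Sum>j<q. s j * M 0 j) | r s. r \<in> R}"
proof
  fix \<alpha> assume \<alpha>: "\<alpha> \<in> strict_closure R"
  define coef where "coef y = (SOME a. represents R f n a y)" for y
  have coef: "represents R f n (coef y) y" for y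
  proof -
    have "\<exists>a. represents R f n a y" using surj by (simp add: represents_def)
    then show ?thesis unfolding coef_def by (rule someI_ex)
  qed
  have exact_row: "\<forall>d. (\<forall>i\<le>n. d i \<in> R) \<longrightarrow> d 0 + (\<Sum>i=1..n. d i * f i) = 0 \<longrightarrow>
      (\<exists>c. \<forall>i\<le>n. d i = (\<Sum>j<q. M i j * c j))"
    using exact by blast
  note unique = represents_unique_mod_first_row[OF \<open>subring R\<close> exact_row]
  have "\<alpha> - coef \<alpha> 0 \<in> ideal_span (M 0) q"
  proof (rule strict_closure_diff_mem_ideal[OF is_ideal_ideal_span _ _ _ \<alpha>])
    show "coef (y + y') 0 - coef y 0 - coef y' 0 \<in> ideal_span (M 0) q" for y y'
      using unique[OF coef represents_add[OF \<open>subring R\<close> coef coef]] by (simp add: algebra_simps)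
    show "r * coef y 0 - coef (r * y) 0 \<in> ideal_span (M 0) q" if "r \<in> R" for r y
      using unique[OF represents_scale[OF \<open>subring R\<close> that coef] coef] by simp
    show "coef 1 0 - 1 \<in> ideal_span (M 0) q"
      using unique[OF coef represents_one[OF \<open>subring R\<close>]] by simp
  qed
  then obtain s where "\<alpha> = coef \<alpha> 0 + (\<Sum>j<q. s j * M 0 j)"
    by (auto simp: ideal_span_def algebra_simps)
  moreover have "coef \<alpha> 0 \<in> R" using coef[of \<alpha>] by (simp add: represents_def)
  ultimately show "\<alpha> \<in> {r + (\<Sum>j<q. s j * M 0 j) | r s. r \<in> R}" by blast
qed

end
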